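(* The set $\mathcal S\subseteq\mathcal G$ of multiplication tables $G$ such that $\overline G$ is simple is comeager in $\mathcal G$.
   Context: Let $\mathbb N=\{1,2,3,\dots\}$. Equip $\mathbb N^{\mathbb N\times\mathbb N}$ with the product topology of the discrete topology on $\mathbb N$. Let $\mathcal G$ be the subspace consisting of those $A\in\mathbb N^{\mathbb N\times\mathbb N}$ that are the multiplication table of a group on the underlying set $\mathbb N$ whose identity element is $1$. For $G\in\mathcal G$, $\overline G$ denotes the group on $\mathbb N$ with multiplication table $G$. *)

theory Defs
  imports "HOL-Analysis.Analysis" "HOL-Algebra.Coset"
begin

definition Npos :: "nat set" where "Npos = {1..}"

text \<open>N^(N x N) with the product of discrete topologies (functions are extensional,
  i.e. they are undefined outside N x N, as in Analysis' product_topology).\<close>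
definition table_top :: "(nat \<times> nat \<Rightarrow> nat) topology" where
  "table_top = product_topology (\<lambda>_. discrete_topology Npos) (Npos \<times> Npos)"

definition grp_of :: "(nat \<times> nat \<Rightarrow> nat) \<Rightarrow> nat monoid" where
  "grp_of A = \<lparr>carrier = Npos, mult = (\<lambda>x y. A (x, y)), one = 1\<rparr>"

definition Gtables :: "(nat \<times> nat \<Rightarrow> nat) set" where
  "Gtables = {A \<in> topspace table_top. group (grp_of A)}"

definition simple_grp :: "('a, 'b) monoid_scheme \<Rightarrow> bool" where
  "simple_grp G \<longleftrightarrow> group G \<and> carrier G \<noteq> {\<one>\<^bsub>G\<^esub>} \<and>
     (\<forall>H. H \<lhd> G \<longrightarrow> H = {\<one>\<^bsub>G\<^esub>} \<or> H = carrier G)"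

definition nowhere_dense_in :: "'a topology \<Rightarrow> 'a set \<Rightarrow> bool" where
  "nowhere_dense_in X S \<longleftrightarrow> S \<subseteq> topspace X \<and> X interior_of (X closure_of S) = {}"

definition meager_in :: "'a topology \<Rightarrow> 'a set \<Rightarrow> bool" where
  "meager_in X S \<longleftrightarrow> S \<subseteq> topspace X \<and>
     (\<exists>\<F>. countable \<F> \<and> (\<forall>N\<in>\<F>. nowhere_dense_in X N) \<and> S \<subseteq> \<Union>\<F>)"

definition comeager_in :: "'a topology \<Rightarrow> 'a set \<Rightarrow> bool" where
  "comeager_in X S \<longleftrightarrow> S \<subseteq> topspace X \<and> meager_in X (topspace X - S)"

end

theory Submission
  imports Defs "HOL-Algebra.Bij" "HOL-Algebra.Generated_Groups"
begin

text \<open>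
  For \<open>a \<noteq> 1\<close> and \<open>b\<close>, the group tables in which \<open>b\<close> lies in the normal closure of \<open>a\<close>
  form an open set, because membership is witnessed by finitely many entries of the table.
  The set is also dense: given a table \<open>A\<close>, embed its group \<open>G\<close> into a countable group \<open>K\<close>
  in which \<open>b\<close> lies in the normal closure of \<open>a\<close>, and transport the structure of \<open>K\<close> to
  \<open>\<nat>\<close> along a bijection that agrees with the embedding on any prescribed finite set of entries.
  Every non-simple table lies in one of the countably many complements, which are nowhere dense.

  The group \<open>K\<close> is generated inside \<open>Sym(G \<times> \<int>)\<close>, on which \<open>G\<close> acts by left translation
  \<open>\<psi>\<close> on the first coordinate. Choosing \<open>c : G \<rightarrow> \<int>\<close> with \<open>c (a x) \<noteq> c x\<close>, the commutator of
  \<open>\<psi> a\<close> with the shear \<open>(x, i) \<mapsto> (x, i + c (a x))\<close> is the shear with nowhere vanishing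
  drift \<open>c x - c (a x)\<close>. This shear, the shift \<open>\<tau> : (x, i) \<mapsto> (x, i + 1)\<close> and \<open>\<psi> b \<tau>\<close> all
  act freely with infinitely many orbits, so they are conjugate; hence \<open>\<psi> b = (\<psi> b \<tau>) \<tau>\<inverse>\<close>
  lies in the normal closure of \<open>\<psi> a\<close>.
\<close>

lemma (in normal) commutator_closed:
  assumes "u \<in> H" "s \<in> carrier G"
  shows "u \<otimes> s \<otimes> inv u \<otimes> inv s \<in> H"
proof -
  have "s \<otimes> inv u \<otimes> inv s \<in> H"
    using assms by (simp add: inv_op_closed2)
  then have "u \<otimes> (s \<otimes> inv u \<otimes> inv s) \<in> H"
    using assms(1) by simp
  then show ?thesis
    using assms by (simp add: m_assoc)
qed

lemma (in normal) mem_if_conjugates: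
  assumes "w \<in> H" "\<sigma>\<^sub>1 \<in> carrier G" "\<sigma>\<^sub>2 \<in> carrier G" "x \<in> carrier G"
    and "\<sigma>\<^sub>1 \<otimes> w \<otimes> inv \<sigma>\<^sub>1 = x \<otimes> t" "\<sigma>\<^sub>2 \<otimes> w \<otimes> inv \<sigma>\<^sub>2 = t"
  shows "x \<in> H"
proof -
  have "x \<otimes> t \<in> H" "t \<in> H"
    using assms inv_op_closed2 by metis+
  then have "x \<otimes> t \<otimes> inv t \<in> H"
    by simp
  then show ?thesis
    using assms(4) \<open>t \<in> H\<close> by (simp add: m_assoc)
qed

lemma (in monoid) foldr_mult_closed: "set xs \<subseteq> carrier G \<Longrightarrow> foldr (\<otimes>) xs \<one> \<in> carrier G"
  by (induction xs) auto

lemma (in monoid) foldr_mult_assoc: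
  "set xs \<subseteq> carrier G \<Longrightarrow> y \<in> carrier G \<Longrightarrow> foldr (\<otimes>) xs y = foldr (\<otimes>) xs \<one> \<otimes> y"
  by (induction xs) (auto simp: m_assoc foldr_mult_closed)

lemma (in group) generate_subset_foldr_mult:
  assumes S: "S \<subseteq> carrier G"
  shows "generate G S \<subseteq> (\<lambda>xs. foldr (\<otimes>) xs \<one>) ` lists (S \<union> m_inv G ` S)"
proof
  fix x
  assume "x \<in> generate G S"
  then show "x \<in> (\<lambda>xs. foldr (\<otimes>) xs \<one>) ` lists (S \<union> m_inv G ` S)"
  proof (induction x rule: generate.induct)
    case one
    show ?case
      by (rule image_eqI[of _ _ "[]"]) auto
  next
    case (incl h)
    then show ?case
      using S by (intro image_eqI[of _ _ "[h]"]) auto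
  next
    case (inv h)
    then show ?case
      using S by (intro image_eqI[of _ _ "[inv h]"]) auto
  next
    case (eng h1 h2)
    then obtain xs ys where xs: "xs \<in> lists (S \<union> m_inv G ` S)" "h1 = foldr (\<otimes>) xs \<one>"
      and ys: "ys \<in> lists (S \<union> m_inv G ` S)" "h2 = foldr (\<otimes>) ys \<one>"
      by blast
    have "S \<union> m_inv G ` S \<subseteq> carrier G"
      using S by auto
    then have "set ys \<subseteq> carrier G" "set xs \<subseteq> carrier G"
      using xs(1) ys(1) unfolding lists_eq_set by blast+
    then have "foldr (\<otimes>) (xs @ ys) \<one> = h1 \<otimes> h2"
      using foldr_mult_assoc[of xs "foldr (\<otimes>) ys \<one>"] foldr_mult_closed[of ys] xs(2) ys(2) by simp
    with xs(1) ys(1) show ?case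
      by (intro image_eqI[of _ _ "xs @ ys"]) auto
  qed
qed

lemma (in group) countable_generate:
  "countable S \<Longrightarrow> S \<subseteq> carrier G \<Longrightarrow> countable (generate G S)"
  by (rule countable_subset[OF generate_subset_foldr_mult]) auto

lemma extend_inj_on_to_bij_betw:
  assumes "countable A" "infinite A" "countable B" "infinite B"
    and "finite F" "F \<subseteq> A" "inj_on \<phi> F" "\<phi> ` F \<subseteq> B"
  obtains \<beta> where "bij_betw \<beta> A B" "\<And>x. x \<in> F \<Longrightarrow> \<beta> x = \<phi> x"
proof -
  have "countable (A - F)" "infinite (A - F)" "countable (B - \<phi> ` F)" "infinite (B - \<phi> ` F)"
    using assms by auto
  then have "bij_betw (from_nat_into (A - F)) UNIV (A - F)"
    "bij_betw (from_nat_into (B - \<phi> ` F)) UNIV (B - \<phi> ` F)"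
    by (simp_all add: bij_betw_from_nat_into)
  then obtain \<gamma> where \<gamma>: "bij_betw \<gamma> (A - F) (B - \<phi> ` F)"
    by (meson bij_betw_trans bij_betw_inv_into)
  define \<beta> where "\<beta> x = (if x \<in> F then \<phi> x else \<gamma> x)" for x
  have "bij_betw \<beta> F (\<phi> ` F)"
    using assms(7) unfolding \<beta>_def bij_betw_def inj_on_def by auto
  moreover have "bij_betw \<beta> (A - F) (B - \<phi> ` F)"
    using \<gamma> by (rule bij_betw_cong[THEN iffD1, rotated]) (simp add: \<beta>_def)
  ultimately have "bij_betw \<beta> (F \<union> (A - F)) (\<phi> ` F \<union> (B - \<phi> ` F))"
    by (rule bij_betw_combine) blast
  moreover have "F \<union> (A - F) = A" "\<phi> ` F \<union> (B - \<phi> ` F) = B"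
    using assms(6,8) by auto
  ultimately show ?thesis
    using that by (simp add: \<beta>_def)
qed

lemma nowhere_dense_in_complement:
  assumes "openin X U" "X closure_of U = topspace X"
  shows "nowhere_dense_in X (topspace X - U)"
proof -
  have "X closure_of (topspace X - U) = topspace X - U"
    using assms(1) by (simp add: closure_of_eq closedin_diff)
  then show ?thesis
    using assms(2) by (simp add: nowhere_dense_in_def interior_of_complement)
qed

section \<open>Semiregular permutations\<close>

abbreviation perm_power :: "'a set \<Rightarrow> ('a \<Rightarrow> 'a) \<Rightarrow> int \<Rightarrow> 'a \<Rightarrow> 'a" where
  "perm_power S p k \<equiv> p [^]\<^bsub>BijGroup S\<^esub> k"

definition perm_orbit :: "'a set \<Rightarrow> ('a \<Rightarrow> 'a) \<Rightarrow> 'a \<Rightarrow> 'a set" where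
  "perm_orbit S p x = range (\<lambda>k. perm_power S p k x)"

definition semiregular :: "'a set \<Rightarrow> ('a \<Rightarrow> 'a) \<Rightarrow> bool" where
  "semiregular S p \<longleftrightarrow> (\<forall>x\<in>S. \<forall>k. k \<noteq> 0 \<longrightarrow> perm_power S p k x \<noteq> x)"

lemma carrier_BijGroup [simp]: "carrier (BijGroup S) = Bij S"
  by (simp add: BijGroup_def)

lemma BijGroup_mult_apply:
  "f \<in> Bij S \<Longrightarrow> g \<in> Bij S \<Longrightarrow> x \<in> S \<Longrightarrow> (f \<otimes>\<^bsub>BijGroup S\<^esub> g) x = f (g x)"
  by (simp add: BijGroup_def compose_def)

lemma Bij_mult_closed: "f \<in> Bij S \<Longrightarrow> g \<in> Bij S \<Longrightarrow> f \<otimes>\<^bsub>BijGroup S\<^esub> g \<in> Bij S"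
  by (simp add: BijGroup_def compose_Bij)

lemma Bij_apply_in: "f \<in> Bij S \<Longrightarrow> x \<in> S \<Longrightarrow> f x \<in> S"
  using Bij_imp_funcset by blast

lemma Bij_eqI: "f \<in> Bij S \<Longrightarrow> g \<in> Bij S \<Longrightarrow> (\<And>x. x \<in> S \<Longrightarrow> f x = g x) \<Longrightarrow> f = g"
  using Bij_imp_extensional extensionalityI by metis

lemma perm_power_Bij: "p \<in> Bij S \<Longrightarrow> perm_power S p k \<in> Bij S"
  using group.int_pow_closed[OF group_BijGroup, of p S k] by simp

lemma perm_power_zero_apply: "x \<in> S \<Longrightarrow> perm_power S p 0 x = x"
  by (simp add: BijGroup_def)

lemma perm_power_add:
  "p \<in> Bij S \<Longrightarrow> perm_power S p (k + l) = perm_power S p k \<otimes>\<^bsub>BijGroup S\<^esub> perm_power S p l"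
  using group.int_pow_mult[OF group_BijGroup, of p S] by simp

lemma perm_power_add_apply:
  "p \<in> Bij S \<Longrightarrow> x \<in> S \<Longrightarrow> perm_power S p (k + l) x = perm_power S p k (perm_power S p l x)"
  by (simp add: perm_power_add BijGroup_mult_apply perm_power_Bij)

lemma perm_power_neg:
  "p \<in> Bij S \<Longrightarrow> perm_power S p (- k) = inv\<^bsub>BijGroup S\<^esub> (perm_power S p k)"
  using group.int_pow_neg[OF group_BijGroup, of p S] by simp

lemma perm_power_one: "p \<in> Bij S \<Longrightarrow> perm_power S p 1 = p"
  using group.int_pow_1[OF group_BijGroup, of p S] by simp

lemma perm_power_apply_in: "p \<in> Bij S \<Longrightarrow> x \<in> S \<Longrightarrow> perm_power S p k x \<in> S"
  by (rule Bij_apply_in[OF perm_power_Bij])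

lemma perm_orbit_self: "x \<in> S \<Longrightarrow> x \<in> perm_orbit S p x"
  unfolding perm_orbit_def using perm_power_zero_apply by (metis rangeI)

lemma perm_orbit_power:
  assumes "p \<in> Bij S" "x \<in> S"
  shows "perm_orbit S p (perm_power S p j x) = perm_orbit S p x"
proof -
  have "perm_power S p k (perm_power S p j x) \<in> perm_orbit S p x" for k
    using perm_power_add_apply[OF assms, of k j] unfolding perm_orbit_def by (metis rangeI)
  moreover have "perm_power S p k x \<in> perm_orbit S p (perm_power S p j x)" for k
    using perm_power_add_apply[OF assms, of "k - j" j] unfolding perm_orbit_def
    by (metis diff_add_cancel rangeI)
  ultimately show ?thesis
    unfolding perm_orbit_def by fast
qed

lemma semiregular_power_inj:
  assumes "semiregular S p" "p \<in> Bij S" "x \<in> S"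
    and "perm_power S p k x = perm_power S p l x"
  shows "k = l"
proof -
  have "perm_power S p (k - l) x = perm_power S p (- l) (perm_power S p l x)"
    using perm_power_add_apply[OF assms(2,3), of "- l" k] assms(4) by simp
  also have "\<dots> = x"
    using perm_power_add_apply[OF assms(2,3), of "- l" l] perm_power_zero_apply[OF assms(3)] by simp
  finally show ?thesis
    using assms(1,3) unfolding semiregular_def by (metis eq_iff_diff_eq_0)
qed

lemma semiregular_shift_model:
  assumes "countable S" and p: "p \<in> Bij S" and "semiregular S p"
    and "infinite (perm_orbit S p ` S)"
  obtains F :: "nat \<times> int \<Rightarrow> 'a"
  where "bij_betw F UNIV S" and "\<And>m k. p (F (m, k)) = F (m, k + 1)"
proof -
  let ?orb = "perm_orbit S p"
  have "countable (?orb ` S)"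
    using assms(1) by simp
  then have e: "bij_betw (from_nat_into (?orb ` S)) UNIV (?orb ` S)"
    using assms(4) by (rule bij_betw_from_nat_into)
  then have "\<forall>m. \<exists>x\<in>S. from_nat_into (?orb ` S) m = ?orb x"
    unfolding bij_betw_def by (metis imageE rangeI)
  then obtain r where r: "\<And>m. r m \<in> S" "\<And>m. from_nat_into (?orb ` S) m = ?orb (r m)"
    by metis
  define F where "F = (\<lambda>(m, k). perm_power S p k (r m))"
  have "F (m, k) = F (m', k') \<Longrightarrow> (m, k) = (m', k')" for m k m' k'
  proof -
    assume eq: "F (m, k) = F (m', k')"
    then have "?orb (r m) = ?orb (r m')"
      using perm_orbit_power[OF p r(1)] unfolding F_def by (metis case_prod_conv)
    then have m: "m = m'"
      using e r(2) by (metis bij_betw_def injD)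
    with eq have "k = k'"
      using semiregular_power_inj[OF assms(3) p r(1)] unfolding F_def by simp
    with m show ?thesis
      by simp
  qed
  then have "inj F"
    by (auto intro: injI)
  moreover have "range F = S"
  proof
    show "range F \<subseteq> S"
      unfolding F_def using perm_power_apply_in[OF p r(1)] by auto
    show "S \<subseteq> range F"
    proof
      fix x assume x: "x \<in> S"
      obtain m where "?orb x = ?orb (r m)"
        using e x r(2) unfolding bij_betw_def by (metis imageE imageI)
      then have "r m \<in> ?orb x"
        using perm_orbit_self[OF r(1)] by simp
      then obtain j where j: "r m = perm_power S p j x"
        unfolding perm_orbit_def by blast
      have "F (m, - j) = x"
        using perm_power_add_apply[OF p x, of "- j" j] perm_power_zero_apply[OF x] j
        unfolding F_def by simp
      then show "x \<in> range F"
        by (metis rangeI)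
    qed
  qed
  moreover have "p (F (m, k)) = F (m, k + 1)" for m k
    using perm_power_add_apply[OF p r(1), of 1 k] perm_power_one[OF p] unfolding F_def
    by (simp add: add.commute)
  ultimately show ?thesis
    using that by (simp add: bij_betw_def)
qed

lemma semiregular_perms_conjugate:
  assumes "countable S" and p: "p \<in> Bij S" and q: "q \<in> Bij S"
    and "semiregular S p" "semiregular S q"
    and "infinite (perm_orbit S p ` S)" "infinite (perm_orbit S q ` S)"
  obtains \<sigma> where "\<sigma> \<in> Bij S" and "\<sigma> \<otimes>\<^bsub>BijGroup S\<^esub> p \<otimes>\<^bsub>BijGroup S\<^esub> inv\<^bsub>BijGroup S\<^esub> \<sigma> = q"
proof -
  interpret Sym: group "BijGroup S"
    by (rule group_BijGroup)
  obtain Fp :: "nat \<times> int \<Rightarrow> 'a" where Fp: "bij_betw Fp UNIV S" "\<And>m k. p (Fp (m, k)) = Fp (m, k + 1)"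
    using semiregular_shift_model[OF assms(1) p assms(4,6)] by blast
  obtain Fq :: "nat \<times> int \<Rightarrow> 'a" where Fq: "bij_betw Fq UNIV S" "\<And>m k. q (Fq (m, k)) = Fq (m, k + 1)"
    using semiregular_shift_model[OF assms(1) q assms(5,7)] by blast
  define \<sigma> where "\<sigma> = (\<lambda>x\<in>S. Fq (inv_into UNIV Fp x))"
  have "bij_betw (Fq \<circ> inv_into UNIV Fp) S S"
    using bij_betw_trans[OF bij_betw_inv_into[OF Fp(1)] Fq(1)] .
  then have "bij_betw \<sigma> S S"
    by (rule bij_betw_cong[THEN iffD1, rotated]) (simp add: \<sigma>_def)
  then have \<sigma>: "\<sigma> \<in> Bij S"
    unfolding Bij_def \<sigma>_def by simp
  have comm: "\<sigma> (p x) = q (\<sigma> x)" if x: "x \<in> S" for x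
  proof -
    obtain m k where mk: "inv_into UNIV Fp x = (m, k)"
      by fastforce
    then have "p x = Fp (m, k + 1)"
      using Fp x by (metis bij_betw_inv_into_right)
    then have "inv_into UNIV Fp (p x) = (m, k + 1)"
      using Fp(1) by (simp add: bij_betw_def)
    then show ?thesis
      unfolding \<sigma>_def using mk x Bij_apply_in[OF p x] Fq(2) by simp
  qed
  have "\<sigma> \<otimes>\<^bsub>BijGroup S\<^esub> p = q \<otimes>\<^bsub>BijGroup S\<^esub> \<sigma>"
  proof (rule Bij_eqI)
    show "\<sigma> \<otimes>\<^bsub>BijGroup S\<^esub> p \<in> Bij S" "q \<otimes>\<^bsub>BijGroup S\<^esub> \<sigma> \<in> Bij S"
      using Sym.m_closed \<sigma> p q by simp_all
    show "(\<sigma> \<otimes>\<^bsub>BijGroup S\<^esub> p) x = (q \<otimes>\<^bsub>BijGroup S\<^esub> \<sigma>) x" if "x \<in> S" for x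
      using comm that \<sigma> p q by (simp add: BijGroup_mult_apply)
  qed
  then have "\<sigma> \<otimes>\<^bsub>BijGroup S\<^esub> p \<otimes>\<^bsub>BijGroup S\<^esub> inv\<^bsub>BijGroup S\<^esub> \<sigma>
      = q \<otimes>\<^bsub>BijGroup S\<^esub> \<sigma> \<otimes>\<^bsub>BijGroup S\<^esub> inv\<^bsub>BijGroup S\<^esub> \<sigma>"
    by simp
  also have "\<dots> = q"
    using \<sigma> q Sym.m_assoc[of q \<sigma> "inv\<^bsub>BijGroup S\<^esub> \<sigma>"] Sym.inv_closed[of \<sigma>] by simp
  finally have "\<sigma> \<otimes>\<^bsub>BijGroup S\<^esub> p \<otimes>\<^bsub>BijGroup S\<^esub> inv\<^bsub>BijGroup S\<^esub> \<sigma> = q" .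
  with \<sigma> show ?thesis
    by (rule that)
qed

section \<open>Shears and left translations of \<open>G \<times> \<int>\<close>\<close>

definition shear :: "'a set \<Rightarrow> ('a \<Rightarrow> int) \<Rightarrow> 'a \<times> int \<Rightarrow> 'a \<times> int" where
  "shear X c = (\<lambda>z\<in>X \<times> UNIV. (fst z, snd z + c (fst z)))"

lemma shear_apply [simp]: "x \<in> X \<Longrightarrow> shear X c (x, i) = (x, i + c x)"
  by (simp add: shear_def)

lemma shear_Bij: "shear X c \<in> Bij (X \<times> UNIV)"
proof -
  have "bij_betw (shear X c) (X \<times> UNIV) (X \<times> UNIV)"
    by (rule bij_betwI[where g = "shear X (\<lambda>x. - c x)"]) (auto simp: shear_def)
  then show ?thesis
    by (simp add: Bij_def shear_def)
qed

lemma shear_mult: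
  "shear X c \<otimes>\<^bsub>BijGroup (X \<times> UNIV)\<^esub> shear X d = shear X (\<lambda>x. c x + d x)"
proof (rule Bij_eqI)
  show "shear X c \<otimes>\<^bsub>BijGroup (X \<times> UNIV)\<^esub> shear X d \<in> Bij (X \<times> UNIV)"
    using Bij_mult_closed shear_Bij by blast
  show "(shear X c \<otimes>\<^bsub>BijGroup (X \<times> UNIV)\<^esub> shear X d) z = shear X (\<lambda>x. c x + d x) z"
    if "z \<in> X \<times> UNIV" for z
    using that by (auto simp: BijGroup_mult_apply shear_Bij)
qed (rule shear_Bij)

lemma shear_zero: "shear X (\<lambda>_. 0) = \<one>\<^bsub>BijGroup (X \<times> UNIV)\<^esub>"
  by (auto simp: shear_def BijGroup_def)

lemma shear_inv: "inv\<^bsub>BijGroup (X \<times> UNIV)\<^esub> (shear X c) = shear X (\<lambda>x. - c x)"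
  by (rule group.inv_equality[OF group_BijGroup])
    (simp_all add: shear_mult shear_Bij flip: shear_zero)

lemma shear_power: "perm_power (X \<times> UNIV) (shear X c) k = shear X (\<lambda>x. k * c x)"
proof (induction k rule: int_induct[where k = 0])
  case base
  show ?case
    by (simp add: shear_zero)
next
  case (step1 k)
  then show ?case
    by (simp add: perm_power_add perm_power_one shear_Bij shear_mult algebra_simps)
next
  case (step2 k)
  have "k - 1 = k + - 1"
    by simp
  with step2 show ?case
    by (simp only: perm_power_add perm_power_neg perm_power_one shear_Bij shear_inv shear_mult)
      (simp add: algebra_simps)
qed

lemma infinite_perm_orbits_if_fibres_inj:
  assumes "infinite X" and "inj_on (\<lambda>x. perm_orbit (X \<times> UNIV) p (x, 0)) X"
  shows "infinite (perm_orbit (X \<times> UNIV) p ` (X \<times> UNIV))"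
proof
  assume "finite (perm_orbit (X \<times> UNIV) p ` (X \<times> UNIV))"
  moreover have "(\<lambda>x. perm_orbit (X \<times> UNIV) p (x, 0)) ` X \<subseteq> perm_orbit (X \<times> UNIV) p ` (X \<times> UNIV)"
    by auto
  ultimately show False
    using assms finite_imageD finite_subset by metis
qed

lemma semiregular_shear: "(\<And>x. x \<in> X \<Longrightarrow> c x \<noteq> 0) \<Longrightarrow> semiregular (X \<times> UNIV) (shear X c)"
  unfolding semiregular_def shear_power by auto

lemma infinite_perm_orbits_shear:
  assumes "infinite X"
  shows "infinite (perm_orbit (X \<times> UNIV) (shear X c) ` (X \<times> UNIV))"
proof (rule infinite_perm_orbits_if_fibres_inj[OF assms inj_onI])
  fix x y
  assume "x \<in> X" "y \<in> X"
    and "perm_orbit (X \<times> UNIV) (shear X c) (x, 0) = perm_orbit (X \<times> UNIV) (shear X c) (y, 0)"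
  then have "(y, 0) \<in> perm_orbit (X \<times> UNIV) (shear X c) (x, 0)"
    using perm_orbit_self[of "(y, 0)" "X \<times> UNIV"] by simp
  with \<open>x \<in> X\<close> show "x = y"
    by (auto simp: perm_orbit_def shear_power)
qed

lemma snd_perm_power_if_snd_incr:
  assumes p: "p \<in> Bij (X \<times> UNIV)" and "\<forall>z\<in>X \<times> UNIV. snd (p z) = snd z + 1"
    and z: "z \<in> X \<times> UNIV"
  shows "snd (perm_power (X \<times> UNIV) p k z) = snd z + k"
proof (induction k rule: int_induct[where k = 0])
  case base
  show ?case
    using perm_power_zero_apply[OF z] by simp
next
  case (step1 k)
  have "snd (p (perm_power (X \<times> UNIV) p k z)) = snd (perm_power (X \<times> UNIV) p k z) + 1"
    using assms(2) perm_power_apply_in[OF p z] by blast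
  then show ?case
    using step1 perm_power_add_apply[OF p z, of 1 k] perm_power_one[OF p] by (simp add: add.commute)
next
  case (step2 k)
  have "snd (p (perm_power (X \<times> UNIV) p (k - 1) z)) = snd (perm_power (X \<times> UNIV) p (k - 1) z) + 1"
    using assms(2) perm_power_apply_in[OF p z] by blast
  then show ?case
    using step2 perm_power_add_apply[OF p z, of 1 "k - 1"] perm_power_one[OF p] by simp
qed

lemma
  fixes p :: "'a \<times> int \<Rightarrow> 'a \<times> int"
  assumes p: "p \<in> Bij (X \<times> UNIV)" and snd_p: "\<forall>z\<in>X \<times> UNIV. snd (p z) = snd z + 1"
  shows semiregular_if_snd_incr: "semiregular (X \<times> UNIV) p"
    and infinite_perm_orbits_if_snd_incr:
      "infinite X \<Longrightarrow> infinite (perm_orbit (X \<times> UNIV) p ` (X \<times> UNIV))"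
proof -
  show "semiregular (X \<times> UNIV) p"
    unfolding semiregular_def
  proof (intro ballI allI impI)
    fix z :: "'a \<times> int" and k :: int
    assume "z \<in> X \<times> UNIV" "k \<noteq> 0"
    then show "perm_power (X \<times> UNIV) p k z \<noteq> z"
      using snd_perm_power_if_snd_incr[OF p snd_p, of z k] by auto
  qed
  assume "infinite X"
  then show "infinite (perm_orbit (X \<times> UNIV) p ` (X \<times> UNIV))"
  proof (rule infinite_perm_orbits_if_fibres_inj[OF _ inj_onI])
    fix x y
    assume "x \<in> X" "y \<in> X"
      and "perm_orbit (X \<times> UNIV) p (x, 0) = perm_orbit (X \<times> UNIV) p (y, 0)"
    then obtain k where k: "(y, 0) = perm_power (X \<times> UNIV) p k (x, 0)"
      using perm_orbit_self[of "(y, 0)" "X \<times> UNIV" p] unfolding perm_orbit_def by auto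
    then have "k = 0"
      using snd_perm_power_if_snd_incr[OF p snd_p, of "(x, 0)" k] \<open>x \<in> X\<close>
      by (metis add_0 snd_conv mem_Times_iff UNIV_I fst_conv)
    with k \<open>x \<in> X\<close> show "x = y"
      by (simp add: BijGroup_def)
  qed
qed

definition left_transl :: "('a, 'b) monoid_scheme \<Rightarrow> 'a \<Rightarrow> 'a \<times> int \<Rightarrow> 'a \<times> int" where
  "left_transl G g = (\<lambda>z\<in>carrier G \<times> UNIV. (g \<otimes>\<^bsub>G\<^esub> fst z, snd z))"

context group
begin

lemma exists_int_colouring_left_mult:
  assumes g: "g \<in> carrier G" and "g \<noteq> \<one>"
  obtains c :: "'a \<Rightarrow> int" where "\<And>x. x \<in> carrier G \<Longrightarrow> c (g \<otimes> x) \<noteq> c x"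
proof -
  define H where "H = generate G {g}"
  have H: "subgroup H G"
    unfolding H_def using g by (simp add: generate_is_subgroup)
  have gH: "g \<in> H"
    unfolding H_def by (simp add: generate.incl)
  define t where "t x = (SOME y. y \<in> H #> x)" for x
  have t: "t x \<in> H #> x" if "x \<in> carrier G" for x
    unfolding t_def using rcos_self[OF that H] by (rule someI)
  have "\<exists>k::int. t x = g [^] k \<otimes> x" if "x \<in> carrier G" for x
    using t[OF that] generate_pow[OF g] unfolding H_def r_coset_def by auto
  then obtain c :: "'a \<Rightarrow> int" where c: "\<And>x. x \<in> carrier G \<Longrightarrow> t x = g [^] c x \<otimes> x"
    by metis
  have "c (g \<otimes> x) \<noteq> c x" if x: "x \<in> carrier G" for x
  proof
    assume eq: "c (g \<otimes> x) = c x"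
    have "H #> (g \<otimes> x) = H #> x"
      using repr_independence[OF rcosI[OF gH subgroup.subset[OF H] x] x H] by simp
    then have "g [^] c x \<otimes> (g \<otimes> x) = g [^] c x \<otimes> x"
      using c[of x] c[of "g \<otimes> x"] eq g x unfolding t_def by simp
    then have "g \<otimes> x = x"
      using g x by simp
    then show False
      using g x \<open>g \<noteq> \<one>\<close> by (simp add: r_cancel_one)
  qed
  then show ?thesis
    by (rule that)
qed

lemma left_transl_apply [simp]: "x \<in> carrier G \<Longrightarrow> left_transl G g (x, i) = (g \<otimes> x, i)"
  by (simp add: left_transl_def)

lemma left_transl_Bij: "g \<in> carrier G \<Longrightarrow> left_transl G g \<in> Bij (carrier G \<times> UNIV)"
proof -
  assume g: "g \<in> carrier G"
  have "bij_betw (left_transl G g) (carrier G \<times> UNIV) (carrier G \<times> UNIV)"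
    by (rule bij_betwI[where g = "left_transl G (inv g)"])
      (use g in \<open>auto simp: left_transl_def m_assoc [symmetric]\<close>)
  then show ?thesis
    by (simp add: Bij_def left_transl_def)
qed

lemma left_transl_hom: "left_transl G \<in> hom G (BijGroup (carrier G \<times> UNIV))"
proof (rule homI)
  fix g h
  assume g: "g \<in> carrier G" and h: "h \<in> carrier G"
  show "left_transl G (g \<otimes> h)
      = left_transl G g \<otimes>\<^bsub>BijGroup (carrier G \<times> UNIV)\<^esub> left_transl G h"
    by (rule Bij_eqI[OF left_transl_Bij Bij_mult_closed[OF left_transl_Bij left_transl_Bij]])
      (use g h in \<open>auto simp: BijGroup_mult_apply left_transl_Bij m_assoc\<close>)
qed (simp add: left_transl_Bij)

lemma inj_on_left_transl: "inj_on (left_transl G) (carrier G)"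
proof (rule inj_onI)
  fix g h
  assume "g \<in> carrier G" "h \<in> carrier G" "left_transl G g = left_transl G h"
  then show "g = h"
    using left_transl_apply[of \<one> _ 0] by (metis one_closed r_one prod.inject)
qed

lemma left_transl_shear:
  assumes g: "g \<in> carrier G"
  shows "left_transl G g \<otimes>\<^bsub>BijGroup (carrier G \<times> UNIV)\<^esub> shear (carrier G) (\<lambda>x. c (g \<otimes> x))
    = shear (carrier G) c \<otimes>\<^bsub>BijGroup (carrier G \<times> UNIV)\<^esub> left_transl G g"
  by (rule Bij_eqI[OF Bij_mult_closed Bij_mult_closed])
    (use g in \<open>auto simp: BijGroup_mult_apply left_transl_Bij shear_Bij\<close>)

lemma commutator_left_transl_shear:
  fixes c :: "'a \<Rightarrow> int"
  assumes g: "g \<in> carrier G"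
  defines "s \<equiv> shear (carrier G) (\<lambda>x. c (g \<otimes> x))"
  shows "left_transl G g \<otimes>\<^bsub>BijGroup (carrier G \<times> UNIV)\<^esub> s
      \<otimes>\<^bsub>BijGroup (carrier G \<times> UNIV)\<^esub> inv\<^bsub>BijGroup (carrier G \<times> UNIV)\<^esub> left_transl G g
      \<otimes>\<^bsub>BijGroup (carrier G \<times> UNIV)\<^esub> inv\<^bsub>BijGroup (carrier G \<times> UNIV)\<^esub> s
    = shear (carrier G) (\<lambda>x. c x - c (g \<otimes> x))"
proof -
  interpret Sym: group "BijGroup (carrier G \<times> UNIV)"
    by (rule group_BijGroup)
  have in_Sym: "left_transl G g \<in> carrier (BijGroup (carrier G \<times> UNIV))"
    "shear (carrier G) c' \<in> carrier (BijGroup (carrier G \<times> UNIV))" for c'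
    using g by (simp_all add: left_transl_Bij shear_Bij)
  have "left_transl G g \<otimes>\<^bsub>BijGroup (carrier G \<times> UNIV)\<^esub> s
      \<otimes>\<^bsub>BijGroup (carrier G \<times> UNIV)\<^esub> inv\<^bsub>BijGroup (carrier G \<times> UNIV)\<^esub> left_transl G g
    = shear (carrier G) c"
    unfolding s_def left_transl_shear[OF g]
    using in_Sym Sym.inv_closed[OF in_Sym(1)] by (simp add: Sym.m_assoc)
  then show ?thesis
    unfolding s_def by (simp add: shear_inv shear_mult)
qed

lemma exists_semiregular_commutator:
  assumes "infinite (carrier G)" and a: "a \<in> carrier G" "a \<noteq> \<one>"
  obtains s w where "s \<in> Bij (carrier G \<times> UNIV)"
    and "w = left_transl G a \<otimes>\<^bsub>BijGroup (carrier G \<times> UNIV)\<^esub> s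
      \<otimes>\<^bsub>BijGroup (carrier G \<times> UNIV)\<^esub> inv\<^bsub>BijGroup (carrier G \<times> UNIV)\<^esub> left_transl G a
      \<otimes>\<^bsub>BijGroup (carrier G \<times> UNIV)\<^esub> inv\<^bsub>BijGroup (carrier G \<times> UNIV)\<^esub> s"
    and "w \<in> Bij (carrier G \<times> UNIV)" "semiregular (carrier G \<times> UNIV) w"
      "infinite (perm_orbit (carrier G \<times> UNIV) w ` (carrier G \<times> UNIV))"
proof -
  obtain c :: "'a \<Rightarrow> int" where c: "\<And>x. x \<in> carrier G \<Longrightarrow> c (a \<otimes> x) \<noteq> c x"
    using exists_int_colouring_left_mult[OF a] by blast
  show ?thesis
  proof (rule that[OF shear_Bij commutator_left_transl_shear[OF a(1), symmetric]])
    show "shear (carrier G) (\<lambda>x. c x - c (a \<otimes> x)) \<in> Bij (carrier G \<times> UNIV)"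
      by (rule shear_Bij)
    show "semiregular (carrier G \<times> UNIV) (shear (carrier G) (\<lambda>x. c x - c (a \<otimes> x)))"
      using c by (intro semiregular_shear) force
    show "infinite (perm_orbit (carrier G \<times> UNIV) (shear (carrier G) (\<lambda>x. c x - c (a \<otimes> x)))
        ` (carrier G \<times> UNIV))"
      by (rule infinite_perm_orbits_shear[OF assms(1)])
  qed
qed

lemma left_transl_shift_semiregular:
  assumes "infinite (carrier G)" "b \<in> carrier G"
  defines "\<beta> \<equiv> left_transl G b \<otimes>\<^bsub>BijGroup (carrier G \<times> UNIV)\<^esub> shear (carrier G) (\<lambda>_. 1)"
  shows "\<beta> \<in> Bij (carrier G \<times> UNIV)" "semiregular (carrier G \<times> UNIV) \<beta>"
    "infinite (perm_orbit (carrier G \<times> UNIV) \<beta> ` (carrier G \<times> UNIV))"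
proof -
  show \<beta>: "\<beta> \<in> Bij (carrier G \<times> UNIV)"
    unfolding \<beta>_def using Bij_mult_closed left_transl_Bij[OF assms(2)] shear_Bij by blast
  have "\<beta> (x, i) = (b \<otimes> x, i + 1)" if "x \<in> carrier G" for x i
    unfolding \<beta>_def using that assms(2)
    by (simp add: BijGroup_mult_apply[OF left_transl_Bij[OF assms(2)] shear_Bij])
  then have "\<forall>z\<in>carrier G \<times> UNIV. snd (\<beta> z) = snd z + 1"
    by auto
  then show "semiregular (carrier G \<times> UNIV) \<beta>"
    "infinite (perm_orbit (carrier G \<times> UNIV) \<beta> ` (carrier G \<times> UNIV))"
    using semiregular_if_snd_incr[OF \<beta>] infinite_perm_orbits_if_snd_incr[OF \<beta>] assms(1) by blast+
qed

lemma left_transl_in_normal_closure: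
  assumes "countable (carrier G)" "infinite (carrier G)"
    and a: "a \<in> carrier G" "a \<noteq> \<one>" and b: "b \<in> carrier G"
  obtains \<Sigma> where "countable \<Sigma>" "\<Sigma> \<subseteq> Bij (carrier G \<times> UNIV)" "left_transl G ` carrier G \<subseteq> \<Sigma>"
    and "\<And>N. N \<lhd> subgroup_generated (BijGroup (carrier G \<times> UNIV)) \<Sigma> \<Longrightarrow>
      left_transl G a \<in> N \<Longrightarrow> left_transl G b \<in> N"
proof -
  let ?X = "carrier G \<times> (UNIV :: int set)"
  let ?Sym = "BijGroup ?X"
  interpret Sym: group ?Sym
    by (rule group_BijGroup)
  have countable_X: "countable ?X"
    using assms(1) by simp
  obtain s w where s: "s \<in> Bij ?X"
    and w_def: "w = left_transl G a \<otimes>\<^bsub>?Sym\<^esub> s \<otimes>\<^bsub>?Sym\<^esub> inv\<^bsub>?Sym\<^esub> left_transl G a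
      \<otimes>\<^bsub>?Sym\<^esub> inv\<^bsub>?Sym\<^esub> s"
    and w: "w \<in> Bij ?X" "semiregular ?X w" "infinite (perm_orbit ?X w ` ?X)"
    using exists_semiregular_commutator[OF assms(2) a] by blast
  define \<tau> where "\<tau> = shear (carrier G) (\<lambda>_. 1)"
  have \<tau>: "\<tau> \<in> Bij ?X" "semiregular ?X \<tau>" "infinite (perm_orbit ?X \<tau> ` ?X)"
    unfolding \<tau>_def
    by (simp_all add: shear_Bij semiregular_shear infinite_perm_orbits_shear[OF assms(2)])
  note \<beta> = left_transl_shift_semiregular[OF assms(2) b, folded \<tau>_def]
  obtain \<sigma>\<^sub>1 where \<sigma>\<^sub>1: "\<sigma>\<^sub>1 \<in> Bij ?X"
    "\<sigma>\<^sub>1 \<otimes>\<^bsub>?Sym\<^esub> w \<otimes>\<^bsub>?Sym\<^esub> inv\<^bsub>?Sym\<^esub> \<sigma>\<^sub>1 = left_transl G b \<otimes>\<^bsub>?Sym\<^esub> \<tau>"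
    using semiregular_perms_conjugate[OF countable_X w(1) \<beta>(1) w(2) \<beta>(2) w(3) \<beta>(3)] by blast
  obtain \<sigma>\<^sub>2 where \<sigma>\<^sub>2: "\<sigma>\<^sub>2 \<in> Bij ?X" "\<sigma>\<^sub>2 \<otimes>\<^bsub>?Sym\<^esub> w \<otimes>\<^bsub>?Sym\<^esub> inv\<^bsub>?Sym\<^esub> \<sigma>\<^sub>2 = \<tau>"
    using semiregular_perms_conjugate[OF countable_X w(1) \<tau>(1) w(2) \<tau>(2) w(3) \<tau>(3)] by blast
  define \<Sigma> where "\<Sigma> = left_transl G ` carrier G \<union> {s, \<sigma>\<^sub>1, \<sigma>\<^sub>2}"
  have \<Sigma>: "\<Sigma> \<subseteq> Bij ?X"
    unfolding \<Sigma>_def using left_transl_Bij s \<sigma>\<^sub>1 \<sigma>\<^sub>2 by auto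
  let ?K = "subgroup_generated ?Sym \<Sigma>"
  have "left_transl G b \<in> N" if N: "N \<lhd> ?K" and a_N: "left_transl G a \<in> N" for N
  proof -
    interpret N: normal N ?K
      by (rule N)
    have K: "left_transl G a \<in> carrier ?K" "left_transl G b \<in> carrier ?K"
      "s \<in> carrier ?K" "\<sigma>\<^sub>1 \<in> carrier ?K" "\<sigma>\<^sub>2 \<in> carrier ?K"
      using Sym.subgroup_generated_subset_carrier_subset[of \<Sigma>] \<Sigma> a b
      unfolding \<Sigma>_def by auto
    have "w \<in> N"
      using N.commutator_closed[OF a_N K(3)] K w_def by simp
    then show ?thesis
      by (rule N.mem_if_conjugates[OF _ K(4,5,2)]) (use K \<sigma>\<^sub>1 \<sigma>\<^sub>2 in simp_all)
  qed
  moreover have "countable \<Sigma>"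
    unfolding \<Sigma>_def using assms(1) by simp
  ultimately show ?thesis
    using that \<Sigma> unfolding \<Sigma>_def by blast
qed

lemma exists_countable_embedding_normal_closure:
  assumes "countable (carrier G)" "infinite (carrier G)"
    and "a \<in> carrier G" "a \<noteq> \<one>" "b \<in> carrier G"
  obtains K :: "('a \<times> int \<Rightarrow> 'a \<times> int) monoid" and \<psi>
  where "group K" "countable (carrier K)" "\<psi> \<in> hom G K" "inj_on \<psi> (carrier G)"
    and "\<And>N. N \<lhd> K \<Longrightarrow> \<psi> a \<in> N \<Longrightarrow> \<psi> b \<in> N"
proof -
  let ?Sym = "BijGroup (carrier G \<times> (UNIV :: int set))"
  interpret Sym: group ?Sym
    by (rule group_BijGroup)
  obtain \<Sigma> where \<Sigma>: "countable \<Sigma>" "\<Sigma> \<subseteq> Bij (carrier G \<times> UNIV)" "left_transl G ` carrier G \<subseteq> \<Sigma>"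
    and normal_closure: "\<And>N. N \<lhd> subgroup_generated ?Sym \<Sigma> \<Longrightarrow>
      left_transl G a \<in> N \<Longrightarrow> left_transl G b \<in> N"
    using left_transl_in_normal_closure[OF assms] by blast
  let ?K = "subgroup_generated ?Sym \<Sigma>"
  have carrier_K: "carrier ?K = generate ?Sym \<Sigma>"
    using \<Sigma>(2) by (simp add: carrier_subgroup_generated Int_absorb1)
  show ?thesis
  proof (rule that[OF Sym.group_subgroup_generated _ _ inj_on_left_transl normal_closure])
    show "countable (carrier ?K)"
      unfolding carrier_K using \<Sigma>(1,2) by (intro Sym.countable_generate) auto
    have "left_transl G ` carrier G \<subseteq> carrier ?K"
      unfolding carrier_K using \<Sigma>(3) by (auto intro: generate.incl)
    then show "left_transl G \<in> hom G ?K"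
      using left_transl_hom by (auto simp: hom_def)
  qed
qed

end

section \<open>Multiplication tables\<close>

lemma topspace_table_top: "topspace table_top = (\<Pi>\<^sub>E p\<in>Npos \<times> Npos. Npos)"
  by (simp add: table_top_def)

lemma table_top_arb: "f \<in> topspace table_top \<Longrightarrow> p \<notin> Npos \<times> Npos \<Longrightarrow> f p = undefined"
  using PiE_arb[of f "Npos \<times> Npos" "\<lambda>_. Npos" p] by (simp add: topspace_table_top)

lemma one_Npos: "1 \<in> Npos"
  by (simp add: Npos_def)

declare one_Npos [simplified, simp] \<comment> \<open>\<open>simp\<close> normalises \<open>1 :: nat\<close> to \<open>Suc 0\<close>\<close>

lemma grp_of_simps [simp]:
  "carrier (grp_of A) = Npos" "x \<otimes>\<^bsub>grp_of A\<^esub> y = A (x, y)" "\<one>\<^bsub>grp_of A\<^esub> = 1"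
  by (simp_all add: grp_of_def)

lemma countable_infinite_Npos: "countable Npos" "infinite Npos"
  by (simp_all add: Npos_def infinite_Ici)

lemma Gtables_group: "A \<in> Gtables \<Longrightarrow> group (grp_of A)"
  by (simp add: Gtables_def)

text \<open>
  The normal closure of \<open>a\<close> in the group with table \<open>T\<close>, generated by rules that each consult
  finitely many entries of \<open>T\<close>, so that membership is an open condition on tables.
\<close>

inductive_set tab_ncl :: "(nat \<times> nat \<Rightarrow> nat) \<Rightarrow> nat \<Rightarrow> nat set" for T a where
  gen: "a \<in> tab_ncl T a"
| one_mem: "1 \<in> tab_ncl T a"
| mult_mem: "x \<in> tab_ncl T a \<Longrightarrow> y \<in> tab_ncl T a \<Longrightarrow> T (x, y) \<in> tab_ncl T a"
| inv_mem: "x \<in> tab_ncl T a \<Longrightarrow> y \<in> Npos \<Longrightarrow> T (x, y) = 1 \<Longrightarrow> y \<in> tab_ncl T a"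
| conj_mem: "x \<in> tab_ncl T a \<Longrightarrow> c \<in> Npos \<Longrightarrow> d \<in> Npos \<Longrightarrow> T (c, d) = 1 \<Longrightarrow>
    T (T (c, x), d) \<in> tab_ncl T a"

lemma tab_ncl_subset_normal:
  assumes "group (grp_of T)" and N: "N \<lhd> grp_of T" and "a \<in> N"
  shows "tab_ncl T a \<subseteq> N"
proof
  interpret G: group "grp_of T"
    by (rule assms(1))
  interpret N: normal N "grp_of T"
    by (rule N)
  have right_inv: "y = inv\<^bsub>grp_of T\<^esub> x" if "x \<in> Npos" "y \<in> Npos" "T (x, y) = 1" for x y
    using G.inv_equality[of y x] G.inv_comm[of x y] that by simp
  fix x
  assume "x \<in> tab_ncl T a"
  then show "x \<in> N"
  proof (induction x rule: tab_ncl.induct)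
    case (inv_mem x y)
    then show ?case
      using right_inv[of x y] N.subset N.m_inv_closed by auto
  next
    case (conj_mem x c d)
    then show ?case
      using right_inv[of c d] N.inv_op_closed2[of c x] by auto
  qed (use assms(3) N.one_closed N.m_closed in auto)
qed

lemma tab_ncl_normal:
  assumes "group (grp_of T)" and a: "a \<in> Npos"
  shows "tab_ncl T a \<lhd> grp_of T"
proof -
  interpret G: group "grp_of T"
    by (rule assms(1))
  have sub: "tab_ncl T a \<subseteq> Npos"
  proof
    fix x
    assume "x \<in> tab_ncl T a"
    then show "x \<in> Npos"
      by (induction x rule: tab_ncl.induct) (use a G.m_closed in simp_all)
  qed
  have "subgroup (tab_ncl T a) (grp_of T)"
  proof (rule G.subgroupI)
    show "tab_ncl T a \<subseteq> carrier (grp_of T)" "tab_ncl T a \<noteq> {}"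
      using sub tab_ncl.gen by auto
    show "inv\<^bsub>grp_of T\<^esub> x \<in> tab_ncl T a" if x: "x \<in> tab_ncl T a" for x
      by (rule tab_ncl.inv_mem[OF x]) (use G.inv_closed[of x] G.r_inv[of x] x sub in auto)
    show "x \<otimes>\<^bsub>grp_of T\<^esub> y \<in> tab_ncl T a" if "x \<in> tab_ncl T a" "y \<in> tab_ncl T a" for x y
      using tab_ncl.mult_mem[OF that] by simp
  qed
  moreover have "g \<otimes>\<^bsub>grp_of T\<^esub> x \<otimes>\<^bsub>grp_of T\<^esub> inv\<^bsub>grp_of T\<^esub> g \<in> tab_ncl T a"
    if "g \<in> Npos" "x \<in> tab_ncl T a" for g x
    using tab_ncl.conj_mem[OF that(2) that(1) _ G.r_inv[of g, unfolded grp_of_simps, OF that(1)]]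
      G.inv_closed[of g] that(1)
    by simp
  ultimately show ?thesis
    by (simp add: G.normal_inv_iff)
qed

lemma tab_ncl_local:
  "x \<in> tab_ncl T a \<Longrightarrow> \<exists>P. finite P \<and> (\<forall>T'. (\<forall>p\<in>P. T' p = T p) \<longrightarrow> x \<in> tab_ncl T' a)"
proof (induction x rule: tab_ncl.induct)
  case gen
  then show ?case
    by (blast intro: tab_ncl.gen)
next
  case one_mem
  then show ?case
    by (blast intro: tab_ncl.one_mem)
next
  case (mult_mem x y)
  then obtain P Q where P: "finite P" "\<forall>T'. (\<forall>p\<in>P. T' p = T p) \<longrightarrow> x \<in> tab_ncl T' a"
    and Q: "finite Q" "\<forall>T'. (\<forall>p\<in>Q. T' p = T p) \<longrightarrow> y \<in> tab_ncl T' a"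
    by blast
  show ?case
  proof (intro exI[of _ "insert (x, y) (P \<union> Q)"] conjI allI impI)
    fix T'
    assume agree: "\<forall>p\<in>insert (x, y) (P \<union> Q). T' p = T p"
    then have "T' (x, y) \<in> tab_ncl T' a"
      using P Q by (intro tab_ncl.mult_mem) auto
    with agree show "T (x, y) \<in> tab_ncl T' a"
      by simp
  qed (use P Q in simp)
next
  case (inv_mem x y)
  then obtain P where P: "finite P" "\<forall>T'. (\<forall>p\<in>P. T' p = T p) \<longrightarrow> x \<in> tab_ncl T' a"
    by blast
  show ?case
  proof (intro exI[of _ "insert (x, y) P"] conjI allI impI)
    fix T'
    assume agree: "\<forall>p\<in>insert (x, y) P. T' p = T p"
    then show "y \<in> tab_ncl T' a"
      using P inv_mem.hyps(2,3) by (intro tab_ncl.inv_mem[of x _ _ y]) auto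
  qed (use P in simp)
next
  case (conj_mem x c d)
  then obtain P where P: "finite P" "\<forall>T'. (\<forall>p\<in>P. T' p = T p) \<longrightarrow> x \<in> tab_ncl T' a"
    by blast
  show ?case
  proof (intro exI[of _ "{(c, x), (T (c, x), d), (c, d)} \<union> P"] conjI allI impI)
    fix T'
    assume agree: "\<forall>p\<in>{(c, x), (T (c, x), d), (c, d)} \<union> P. T' p = T p"
    then have "T' (T' (c, x), d) \<in> tab_ncl T' a"
      using P conj_mem.hyps(2-4) by (intro tab_ncl.conj_mem) auto
    with agree show "T (T (c, x), d) \<in> tab_ncl T' a"
      by simp
  qed (use P in simp)
qed

lemma not_simple_imp_tab_ncl_gap:
  assumes "A \<in> Gtables" "\<not> simple_grp (grp_of A)"
  obtains a b where "a \<in> Npos" "a \<noteq> 1" "b \<in> Npos" "b \<notin> tab_ncl A a"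
proof -
  interpret G: group "grp_of A"
    using Gtables_group[OF assms(1)] .
  have "carrier (grp_of A) \<noteq> {\<one>\<^bsub>grp_of A\<^esub>}"
  proof
    assume "carrier (grp_of A) = {\<one>\<^bsub>grp_of A\<^esub>}"
    then show False
      by (metis countable_infinite_Npos(2) finite.emptyI finite.insertI grp_of_simps(1))
  qed
  with assms(2) G.is_group obtain H where H0: "H \<lhd> grp_of A" "H \<noteq> {\<one>\<^bsub>grp_of A\<^esub>}"
    "H \<noteq> carrier (grp_of A)"
    unfolding simple_grp_def by blast
  then have H: "H \<lhd> grp_of A" "H \<noteq> {1}" "H \<noteq> Npos"
    by simp_all
  have "1 \<in> H" "H \<subseteq> Npos"
    using subgroup.one_closed[OF normal_imp_subgroup[OF H(1)]]
      subgroup.subset[OF normal_imp_subgroup[OF H(1)]] by simp_all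
  then obtain a b where "a \<in> H" "a \<noteq> 1" "b \<in> Npos" "b \<notin> H"
    using H(2,3) by blast
  moreover have "tab_ncl A a \<subseteq> H"
    using tab_ncl_subset_normal[OF G.is_group H(1) \<open>a \<in> H\<close>] .
  ultimately show ?thesis
    using that \<open>H \<subseteq> Npos\<close> by blast
qed

definition transport_table :: "('g, 'm) monoid_scheme \<Rightarrow> (nat \<Rightarrow> 'g) \<Rightarrow> nat \<times> nat \<Rightarrow> nat" where
  "transport_table K \<beta> = (\<lambda>p\<in>Npos \<times> Npos. inv_into Npos \<beta> (\<beta> (fst p) \<otimes>\<^bsub>K\<^esub> \<beta> (snd p)))"

context
  fixes K :: "('g, 'm) monoid_scheme" and \<beta> :: "nat \<Rightarrow> 'g"
  assumes K: "group K" and \<beta>: "bij_betw \<beta> Npos (carrier K)" and \<beta>_one: "\<beta> 1 = \<one>\<^bsub>K\<^esub>"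
begin

private lemma \<beta>_inv_into: "y \<in> carrier K \<Longrightarrow> inv_into Npos \<beta> y \<in> Npos \<and> \<beta> (inv_into Npos \<beta> y) = y"
  using \<beta> by (simp add: bij_betw_inv_into_right bij_betw_imp_surj_on inv_into_into)

lemma transport_table_in_Npos:
  "x \<in> Npos \<Longrightarrow> y \<in> Npos \<Longrightarrow> transport_table K \<beta> (x, y) \<in> Npos"
  using \<beta>_inv_into group.is_monoid[OF K] bij_betwE[OF \<beta>]
  by (simp add: transport_table_def monoid.m_closed)

lemma transport_table_mult:
  "x \<in> Npos \<Longrightarrow> y \<in> Npos \<Longrightarrow> \<beta> (transport_table K \<beta> (x, y)) = \<beta> x \<otimes>\<^bsub>K\<^esub> \<beta> y"
  using \<beta>_inv_into group.is_monoid[OF K] bij_betwE[OF \<beta>]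
  by (simp add: transport_table_def monoid.m_closed)

lemma transport_table_in_topspace: "transport_table K \<beta> \<in> topspace table_top"
  using transport_table_in_Npos by (auto simp: topspace_table_top transport_table_def)

lemma group_transport_table: "group (grp_of (transport_table K \<beta>))"
proof -
  interpret K: group K
    by (rule K)
  let ?T = "transport_table K \<beta>"
  have \<beta>_eq: "x = y" if "x \<in> Npos" "y \<in> Npos" "\<beta> x = \<beta> y" for x y
    using \<beta> that by (meson bij_betw_def inj_onD)
  have \<beta>_in: "\<beta> x \<in> carrier K" if "x \<in> Npos" for x
    using bij_betwE[OF \<beta>] that by blast
  show ?thesis
  proof (rule groupI; simp only: grp_of_simps)
    show "?T (x, y) \<in> Npos" if "x \<in> Npos" "y \<in> Npos" for x y
      using that by (rule transport_table_in_Npos)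
    show "?T (?T (x, y), z) = ?T (x, ?T (y, z))" if "x \<in> Npos" "y \<in> Npos" "z \<in> Npos" for x y z
      using that
      by (intro \<beta>_eq) (simp_all add: transport_table_in_Npos transport_table_mult K.m_assoc \<beta>_in)
    show "?T (1, x) = x" if x: "x \<in> Npos" for x
    proof (rule \<beta>_eq[OF transport_table_in_Npos[OF one_Npos x] x])
      show "\<beta> (?T (1, x)) = \<beta> x"
        using transport_table_mult[OF one_Npos x] \<beta>_in[OF x] \<beta>_one by simp
    qed
    show "\<exists>y\<in>Npos. ?T (y, x) = 1" if x: "x \<in> Npos" for x
    proof
      let ?y = "inv_into Npos \<beta> (inv\<^bsub>K\<^esub> \<beta> x)"
      show y: "?y \<in> Npos"
        using \<beta>_inv_into \<beta>_in[OF x] by simp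
      show "?T (?y, x) = 1"
      proof (rule \<beta>_eq[OF transport_table_in_Npos[OF y x] one_Npos])
        show "\<beta> (?T (?y, x)) = \<beta> 1"
          using transport_table_mult[OF y x] \<beta>_inv_into \<beta>_in[OF x] \<beta>_one by simp
      qed
    qed
  qed simp
qed

lemma transport_table_iso: "\<beta> \<in> iso (grp_of (transport_table K \<beta>)) K"
  using \<beta> by (simp add: iso_def hom_def transport_table_mult bij_betwE)

lemma transport_table_eqI:
  assumes "x \<in> Npos" "y \<in> Npos" "z \<in> Npos" "\<beta> z = \<beta> x \<otimes>\<^bsub>K\<^esub> \<beta> y"
  shows "transport_table K \<beta> (x, y) = z"
  using assms transport_table_mult transport_table_in_Npos \<beta> by (metis bij_betw_def inj_onD)

lemma transport_table_agree:
  assumes A: "A \<in> topspace table_top"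
    and "\<And>x y. (x, y) \<in> P \<Longrightarrow> x \<in> Npos \<Longrightarrow> y \<in> Npos \<Longrightarrow> \<beta> (A (x, y)) = \<beta> x \<otimes>\<^bsub>K\<^esub> \<beta> y"
  shows "\<forall>p\<in>P. transport_table K \<beta> p = A p"
proof
  fix p
  assume "p \<in> P"
  show "transport_table K \<beta> p = A p"
  proof (cases "p \<in> Npos \<times> Npos")
    case True
    then obtain x y where p: "p = (x, y)" "x \<in> Npos" "y \<in> Npos"
      by blast
    moreover have "A (x, y) \<in> Npos"
      using A p PiE_mem[of A "Npos \<times> Npos" "\<lambda>_. Npos" p] by (simp add: topspace_table_top)
    ultimately show ?thesis
      using assms(2) \<open>p \<in> P\<close> by (simp add: transport_table_eqI)
  next
    case False
    then show ?thesis
      using table_top_arb[OF transport_table_in_topspace] table_top_arb[OF A] by simp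
  qed
qed

lemma in_tab_ncl_transport_table:
  assumes a: "a \<in> Npos" and b: "b \<in> Npos" and "\<And>N. N \<lhd> K \<Longrightarrow> \<beta> a \<in> N \<Longrightarrow> \<beta> b \<in> N"
  shows "b \<in> tab_ncl (transport_table K \<beta>) a"
proof -
  let ?N = "tab_ncl (transport_table K \<beta>) a"
  have N: "?N \<lhd> grp_of (transport_table K \<beta>)"
    using tab_ncl_normal[OF group_transport_table a] .
  have "\<beta> ` ?N \<lhd> K"
    using iso_normal_subgroup[OF transport_table_iso group_transport_table K N] .
  then have "\<beta> b \<in> \<beta> ` ?N"
    using assms(3) tab_ncl.gen by blast
  moreover have "?N \<subseteq> Npos"
    using normal_imp_subgroup[OF N] subgroup.subset by fastforce
  ultimately show ?thesis
    using b \<beta> by (metis bij_betw_def inj_on_image_mem_iff)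
qed

end

section \<open>The Baire category argument\<close>

lemma openin_table_top_agree:
  assumes A: "A \<in> topspace table_top" and "finite P"
  shows "openin table_top {f \<in> topspace table_top. \<forall>p\<in>P. f p = A p}"
proof -
  let ?I = "Npos \<times> Npos"
  have "f p = A p" if "f \<in> topspace table_top" "p \<notin> ?I" for f p
    using table_top_arb[OF that] table_top_arb[OF A that(2)] by simp
  then have "{f \<in> topspace table_top. \<forall>p\<in>P. f p = A p}
      = (\<Inter>p\<in>P \<inter> ?I. {f \<in> topspace table_top. f p \<in> {A p}}) \<inter> topspace table_top"
    by blast
  moreover have "openin table_top {f \<in> topspace table_top. f p \<in> {A p}}" if p: "p \<in> ?I" for p
  proof -
    have "openin (discrete_topology Npos) {A p}"
      using PiE_mem[of A ?I "\<lambda>_. Npos" p] A p by (simp add: topspace_table_top)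
    then show ?thesis
      unfolding table_top_def
      by (rule openin_continuous_map_preimage[OF continuous_map_product_projection[OF p]])
  qed
  moreover have "finite (P \<inter> ?I)"
    using \<open>finite P\<close> by simp
  ultimately show ?thesis
    by (metis (no_types, lifting) IntD2 openin_INT)
qed

lemma openin_table_top_finite_agreement:
  assumes "openin table_top U" "A \<in> U"
  obtains P where "finite P" "\<And>f. f \<in> topspace table_top \<Longrightarrow> \<forall>p\<in>P. f p = A p \<Longrightarrow> f \<in> U"
proof -
  let ?I = "Npos \<times> Npos"
  obtain V where V: "finite {i \<in> ?I. V i \<noteq> Npos}" "A \<in> Pi\<^sub>E ?I V" "Pi\<^sub>E ?I V \<subseteq> U"
    using assms unfolding table_top_def openin_product_topology_alt by force
  have "f \<in> U" if f: "f \<in> topspace table_top" and agree: "\<forall>p\<in>{i \<in> ?I. V i \<noteq> Npos}. f p = A p" for f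
  proof -
    have "f i \<in> V i" if "i \<in> ?I" for i
    proof (cases "V i = Npos")
      case True
      then show ?thesis
        using PiE_mem[of f ?I "\<lambda>_. Npos" i] f that by (simp add: topspace_table_top)
    next
      case False
      then have "f i = A i"
        using agree that by blast
      then show ?thesis
        using PiE_mem[OF V(2) that] by simp
    qed
    then have "f \<in> Pi\<^sub>E ?I V"
      using f by (simp add: PiE_iff topspace_table_top)
    then show ?thesis
      using V(3) by blast
  qed
  with V(1) show ?thesis
    using that by blast
qed

lemma topspace_Gtables: "topspace (subtopology table_top Gtables) = Gtables"
  by (auto simp: Gtables_def)

lemma exists_agreeing_table_in_tab_ncl:
  assumes A: "A \<in> Gtables" and a: "a \<in> Npos" "a \<noteq> 1" and b: "b \<in> Npos" and "finite P"
  obtains A' where "A' \<in> Gtables" "\<forall>p\<in>P. A' p = A p" "b \<in> tab_ncl A' a"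
proof -
  interpret G: group "grp_of A"
    using Gtables_group[OF A] .
  obtain K :: "(nat \<times> int \<Rightarrow> nat \<times> int) monoid" and \<psi>
    where K: "group K" "countable (carrier K)" and \<psi>: "\<psi> \<in> hom (grp_of A) K" "inj_on \<psi> Npos"
      and normal_closure: "\<And>N. N \<lhd> K \<Longrightarrow> \<psi> a \<in> N \<Longrightarrow> \<psi> b \<in> N"
    using G.exists_countable_embedding_normal_closure[of a b] countable_infinite_Npos a b by auto
  have "\<psi> ` Npos \<subseteq> carrier K"
    using \<psi>(1) hom_in_carrier by fastforce
  then have "infinite (carrier K)"
    using \<psi>(2) countable_infinite_Npos(2) finite_imageD finite_subset by metis
  define Q where "Q = P \<inter> (Npos \<times> Npos)"
  define F where "F = {1, a, b} \<union> fst ` Q \<union> snd ` Q \<union> A ` Q"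
    \<comment> \<open>the points on which the relabelling \<open>\<beta>\<close> must agree with \<open>\<psi>\<close>\<close>
  have F: "finite F" "F \<subseteq> Npos"
    using \<open>finite P\<close> a b G.m_closed by (auto simp: F_def Q_def)
  obtain \<beta> where \<beta>: "bij_betw \<beta> Npos (carrier K)" and \<beta>_F: "\<And>x. x \<in> F \<Longrightarrow> \<beta> x = \<psi> x"
    using extend_inj_on_to_bij_betw[OF countable_infinite_Npos K(2) \<open>infinite (carrier K)\<close> F
        inj_on_subset[OF \<psi>(2) F(2)]] \<open>\<psi> ` Npos \<subseteq> carrier K\<close> F(2) by blast
  have \<beta>_one: "\<beta> 1 = \<one>\<^bsub>K\<^esub>"
    using \<beta>_F[of 1] hom_one[OF \<psi>(1) G.is_group K(1)] by (simp add: F_def)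
  define A' where "A' = transport_table K \<beta>"
  show ?thesis
  proof (rule that)
    show "A' \<in> Gtables"
      unfolding A'_def Gtables_def
      using transport_table_in_topspace[OF K(1) \<beta> \<beta>_one] group_transport_table[OF K(1) \<beta> \<beta>_one]
      by simp
    show "b \<in> tab_ncl A' a"
      unfolding A'_def using in_tab_ncl_transport_table[OF K(1) \<beta> \<beta>_one a(1) b] normal_closure \<beta>_F
      by (simp add: F_def)
    have "\<beta> (A (x, y)) = \<beta> x \<otimes>\<^bsub>K\<^esub> \<beta> y" if "(x, y) \<in> P" "x \<in> Npos" "y \<in> Npos" for x y
    proof -
      have "x \<in> F" "y \<in> F" "A (x, y) \<in> F"
        using that unfolding F_def Q_def by (force simp: image_iff)+
      then show ?thesis
        using \<beta>_F hom_mult[OF \<psi>(1)] that by simp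
    qed
    moreover have "A \<in> topspace table_top"
      using A by (simp add: Gtables_def)
    ultimately show "\<forall>p\<in>P. A' p = A p"
      unfolding A'_def by (intro transport_table_agree[OF K(1) \<beta> \<beta>_one])
  qed
qed

lemma openin_tab_ncl_tables:
  "openin (subtopology table_top Gtables) {A \<in> Gtables. b \<in> tab_ncl A a}"
proof (subst openin_subopen, intro ballI)
  fix A
  assume A: "A \<in> {A \<in> Gtables. b \<in> tab_ncl A a}"
  then obtain P where "finite P" and P: "\<forall>T'. (\<forall>p\<in>P. T' p = A p) \<longrightarrow> b \<in> tab_ncl T' a"
    using tab_ncl_local by blast
  define W where "W = {f \<in> topspace table_top. \<forall>p\<in>P. f p = A p}"
  have "openin table_top W"
    unfolding W_def using A \<open>finite P\<close> by (intro openin_table_top_agree) (auto simp: Gtables_def)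
  then have "openin (subtopology table_top Gtables) (W \<inter> Gtables)"
    by (rule openin_subtopology_Int)
  moreover have "A \<in> W \<inter> Gtables" "W \<inter> Gtables \<subseteq> {A \<in> Gtables. b \<in> tab_ncl A a}"
    using A P by (auto simp: W_def Gtables_def)
  ultimately show "\<exists>T. openin (subtopology table_top Gtables) T \<and> A \<in> T \<and>
      T \<subseteq> {A \<in> Gtables. b \<in> tab_ncl A a}"
    by blast
qed

lemma dense_tab_ncl_tables:
  assumes "a \<in> Npos" "a \<noteq> 1" "b \<in> Npos"
  shows "subtopology table_top Gtables closure_of {A \<in> Gtables. b \<in> tab_ncl A a}
    = topspace (subtopology table_top Gtables)"
  unfolding dense_intersects_open
proof (intro allI impI)
  fix T
  assume T: "openin (subtopology table_top Gtables) T \<and> T \<noteq> {}"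
  then obtain A where "A \<in> T"
    by blast
  from T obtain V where V: "openin table_top V" "T = V \<inter> Gtables"
    unfolding openin_subtopology by blast
  with \<open>A \<in> T\<close> obtain P where "finite P"
    and P: "\<And>f. f \<in> topspace table_top \<Longrightarrow> \<forall>p\<in>P. f p = A p \<Longrightarrow> f \<in> V"
    using openin_table_top_finite_agreement[OF V(1)] by auto
  from V \<open>A \<in> T\<close> have "A \<in> Gtables"
    by blast
  then obtain A' where A': "A' \<in> Gtables" "\<forall>p\<in>P. A' p = A p" "b \<in> tab_ncl A' a"
    using exists_agreeing_table_in_tab_ncl[OF _ assms \<open>finite P\<close>] by blast
  then have "A' \<in> V"
    using P[of A'] by (simp add: Gtables_def)
  with A' V(2) show "{A \<in> Gtables. b \<in> tab_ncl A a} \<inter> T \<noteq> {}"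
    by blast
qed

theorem corollary4p6:
  shows "comeager_in (subtopology table_top Gtables) {A \<in> Gtables. simple_grp (grp_of A)}"
proof -
  let ?X = "subtopology table_top Gtables"
  let ?U = "\<lambda>a b. {A \<in> Gtables. b \<in> tab_ncl A a}"
  define \<F> where "\<F> = (\<lambda>(a, b). Gtables - ?U a b) ` ((Npos - {1}) \<times> Npos)"
  have "countable \<F>"
    unfolding \<F>_def by simp
  moreover have "\<forall>N\<in>\<F>. nowhere_dense_in ?X N"
  proof
    fix N
    assume "N \<in> \<F>"
    then obtain a b where ab: "a \<in> Npos" "a \<noteq> 1" "b \<in> Npos" and N: "N = Gtables - ?U a b"
      unfolding \<F>_def by blast
    show "nowhere_dense_in ?X N"
      using nowhere_dense_in_complement[OF openin_tab_ncl_tables dense_tab_ncl_tables[OF ab]]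
      unfolding N topspace_Gtables .
  qed
  moreover have "A \<in> \<Union>\<F>" if A: "A \<in> Gtables" "\<not> simple_grp (grp_of A)" for A
  proof -
    obtain a b where "a \<in> Npos" "a \<noteq> 1" "b \<in> Npos" "b \<notin> tab_ncl A a"
      using not_simple_imp_tab_ncl_gap[OF A] .
    then have "Gtables - ?U a b \<in> \<F>" "A \<in> Gtables - ?U a b"
      unfolding \<F>_def using \<open>A \<in> Gtables\<close> by auto
    then show ?thesis
      by blast
  qed
  ultimately show ?thesis
    unfolding comeager_in_def meager_in_def topspace_Gtables by blast
qed

end
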